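(* For $0<c<1$ and curves $\gamma(r)$, $\tilde\gamma(s)$ in $\mathbb{H}^2$ parametrized by arc length with unit normal fields $N(r)$, $\tilde N(s)$ and curvatures $\kappa(r)$, $\tilde\kappa(s)$ (so $\gamma''=\gamma+\kappa N$, $N'=-\kappa\gamma'$, and similarly for $\tilde\gamma$), let $M^c_{\kappa,\tilde\kappa}$ be the hypersurface of $\mathbb{H}^2\times\mathbb{H}^2$ given by the immersion $(t,r,s)\mapsto\big(\cosh(\sqrt c\,t)\gamma(r)+\sinh(\sqrt c\,t)N(r),\ \cosh(\sqrt{1-c}\,t)\tilde\gamma(s)+\sinh(\sqrt{1-c}\,t)\tilde N(s)\big)$, and let $M$ be an open part of $M^c_{\kappa,\tilde\kappa}$. Then: (1) $M$ is minimal if and only if $c=\tfrac12$ and $\kappa(r)$ and $\tilde\kappa(s)$ are equal to the same constant; (2) $M$ has constant sectional curvature if and only if $c=\tfrac12$ and $\kappa$, $\tilde\kappa$ are constants satisfying $\kappa\tilde\kappa=1$; moreover, in that case the sectional curvature of $M$ equals $-\tfrac12$.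
   Context: $\mathbb{R}^3_1$ denotes $\mathbb{R}^3$ with the Lorentzian inner product $\langle x,y\rangle=-x_1y_1+x_2y_2+x_3y_3$, $\mathbb{H}^2=\{x\in\mathbb{R}^3_1:\langle x,x\rangle=-1,\ x_1>0\}$, and $\mathbb{H}^2\times\mathbb{H}^2\subset\mathbb{R}^3_1\times\mathbb{R}^3_1$ carries the Riemannian product metric; $M$ carries the induced metric. *)

theory Defs
  imports "HOL-Analysis.Analysis"
begin

definition lor :: "real^3 \<Rightarrow> real^3 \<Rightarrow> real" where
  "lor x y = - x$1 * y$1 + x$2 * y$2 + x$3 * y$3"

text \<open>Inner product on R^3_1 x R^3_1 (restricts to the product Riemannian metric
  on H2 x H2).\<close>
definition ip6 :: "(real^3) \<times> (real^3) \<Rightarrow> (real^3) \<times> (real^3) \<Rightarrow> real" where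
  "ip6 u v = lor (fst u) (fst v) + lor (snd u) (snd v)"

definition frenet_curve ::
  "real set \<Rightarrow> (real \<Rightarrow> real^3) \<Rightarrow> (real \<Rightarrow> real^3) \<Rightarrow> (real \<Rightarrow> real) \<Rightarrow> bool" where
  "frenet_curve I gam N kap \<longleftrightarrow> open I \<and>
     (\<forall>r\<in>I. gam differentiable (at r) \<and>
        lor (gam r) (gam r) = -1 \<and> gam r $ 1 > 0 \<and>
        lor (vector_derivative gam (at r)) (vector_derivative gam (at r)) = 1 \<and>
        lor (N r) (N r) = 1 \<and> lor (N r) (gam r) = 0 \<and>
        lor (N r) (vector_derivative gam (at r)) = 0 \<and>
        ((\<lambda>q. vector_derivative gam (at q)) has_vector_derivative
            (gam r + kap r *\<^sub>R N r)) (at r) \<and>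
        (N has_vector_derivative (- kap r *\<^sub>R vector_derivative gam (at r))) (at r)) \<and>
     (\<forall>n. \<forall>r\<in>I. ((deriv ^^ n) kap) differentiable (at r))"

text \<open>The immersion (t,r,s) -> ..., with parameters x = (t,r,s) = (x$1, x$2, x$3).\<close>
definition Fmap ::
  "real \<Rightarrow> (real \<Rightarrow> real^3) \<Rightarrow> (real \<Rightarrow> real^3) \<Rightarrow> (real \<Rightarrow> real^3) \<Rightarrow> (real \<Rightarrow> real^3)
     \<Rightarrow> real^3 \<Rightarrow> (real^3) \<times> (real^3)" where
  "Fmap c gam N gamt Nt x =
     (cosh (sqrt c * x$1) *\<^sub>R gam (x$2) + sinh (sqrt c * x$1) *\<^sub>R N (x$2),
      cosh (sqrt (1 - c) * x$1) *\<^sub>R gamt (x$3) + sinh (sqrt (1 - c) * x$1) *\<^sub>R Nt (x$3))"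

definition pd :: "3 \<Rightarrow> (real^3 \<Rightarrow> 'b::real_normed_vector) \<Rightarrow> real^3 \<Rightarrow> 'b" where
  "pd i f x = vector_derivative (\<lambda>h. f (x + h *\<^sub>R axis i 1)) (at 0)"

definition metric :: "(real^3 \<Rightarrow> (real^3) \<times> (real^3)) \<Rightarrow> real^3 \<Rightarrow> 3 \<Rightarrow> 3 \<Rightarrow> real" where
  "metric F x i j = ip6 (pd i F x) (pd j F x)"

definition ginv :: "(real^3 \<Rightarrow> (real^3) \<times> (real^3)) \<Rightarrow> real^3 \<Rightarrow> 3 \<Rightarrow> 3 \<Rightarrow> real" where
  "ginv F x i j = matrix_inv (\<chi> a b. metric F x a b) $ i $ j"

definition gform :: "(real^3 \<Rightarrow> (real^3) \<times> (real^3)) \<Rightarrow> real^3 \<Rightarrow> real^3 \<Rightarrow> real^3 \<Rightarrow> real" where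
  "gform F x X Y = (\<Sum>i\<in>UNIV. \<Sum>j\<in>UNIV. X$i * Y$j * metric F x i j)"

definition immersion_on :: "(real^3 \<Rightarrow> (real^3) \<times> (real^3)) \<Rightarrow> (real^3) set \<Rightarrow> bool" where
  "immersion_on F U \<longleftrightarrow> (\<forall>x\<in>U. \<forall>v. v \<noteq> 0 \<longrightarrow> gform F x v v > 0)"

definition christ :: "(real^3 \<Rightarrow> (real^3) \<times> (real^3)) \<Rightarrow> real^3 \<Rightarrow> 3 \<Rightarrow> 3 \<Rightarrow> 3 \<Rightarrow> real" where
  "christ F x k i j = 1/2 * (\<Sum>l\<in>UNIV. ginv F x k l *
      (pd i (\<lambda>y. metric F y j l) x + pd j (\<lambda>y. metric F y i l) x - pd l (\<lambda>y. metric F y i j) x))"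

text \<open>R(d_i,d_j)d_k = sum_l riem_up l i j k d_l, where
  R(X,Y) = nabla_X nabla_Y - nabla_Y nabla_X - nabla_[X,Y].\<close>
definition riem_up :: "(real^3 \<Rightarrow> (real^3) \<times> (real^3)) \<Rightarrow> real^3 \<Rightarrow> 3 \<Rightarrow> 3 \<Rightarrow> 3 \<Rightarrow> 3 \<Rightarrow> real" where
  "riem_up F x l i j k =
     pd i (\<lambda>y. christ F y l j k) x - pd j (\<lambda>y. christ F y l i k) x +
     (\<Sum>m\<in>UNIV. christ F x m j k * christ F x l i m - christ F x m i k * christ F x l j m)"

definition riem :: "(real^3 \<Rightarrow> (real^3) \<times> (real^3)) \<Rightarrow> real^3 \<Rightarrow> 3 \<Rightarrow> 3 \<Rightarrow> 3 \<Rightarrow> 3 \<Rightarrow> real" where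
  "riem F x i j k l = (\<Sum>m\<in>UNIV. riem_up F x m i j k * metric F x m l)"

definition sec_curv :: "(real^3 \<Rightarrow> (real^3) \<times> (real^3)) \<Rightarrow> real^3 \<Rightarrow> real^3 \<Rightarrow> real^3 \<Rightarrow> real" where
  "sec_curv F x X Y =
     (\<Sum>i\<in>UNIV. \<Sum>j\<in>UNIV. \<Sum>k\<in>UNIV. \<Sum>l\<in>UNIV. X$i * Y$j * Y$k * X$l * riem F x i j k l) /
     (gform F x X X * gform F x Y Y - (gform F x X Y)^2)"

definition const_sec_curv :: "(real^3 \<Rightarrow> (real^3) \<times> (real^3)) \<Rightarrow> (real^3) set \<Rightarrow> real \<Rightarrow> bool" where
  "const_sec_curv F U K \<longleftrightarrow>
     (\<forall>x\<in>U. \<forall>X Y. gform F x X X * gform F x Y Y - (gform F x X Y)^2 \<noteq> 0 \<longrightarrow>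
        sec_curv F x X Y = K)"

definition unit_normal :: "(real^3 \<Rightarrow> (real^3) \<times> (real^3)) \<Rightarrow> real^3 \<Rightarrow> (real^3) \<times> (real^3) \<Rightarrow> bool" where
  "unit_normal F x xi \<longleftrightarrow>
     lor (fst (F x)) (fst xi) = 0 \<and> lor (snd (F x)) (snd xi) = 0 \<and>
     (\<forall>i. ip6 (pd i F x) xi = 0) \<and> ip6 xi xi = 1"

definition mean_curv :: "(real^3 \<Rightarrow> (real^3) \<times> (real^3)) \<Rightarrow> real^3 \<Rightarrow> (real^3) \<times> (real^3) \<Rightarrow> real" where
  "mean_curv F x xi = 1/3 * (\<Sum>i\<in>UNIV. \<Sum>j\<in>UNIV. ginv F x i j * ip6 (pd i (pd j F) x) xi)"

definition minimal_on :: "(real^3 \<Rightarrow> (real^3) \<times> (real^3)) \<Rightarrow> (real^3) set \<Rightarrow> bool" where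
  "minimal_on F U \<longleftrightarrow> (\<forall>x\<in>U. \<forall>xi. unit_normal F x xi \<longrightarrow> mean_curv F x xi = 0)"

end

theory Submission
  imports Defs
begin

(*
  In the coordinates (t, r, s) the induced metric is dt^2 + A^2 dr^2 + B^2 ds^2, where
  A = cosh (sqrt c t) - kappa(r) sinh (sqrt c t) and
  B = cosh (sqrt (1 - c) t) - kappa~(s) sinh (sqrt (1 - c) t).
  The coordinate planes have sectional curvatures -c, -(1 - c) and -A_t B_t / (A B), so constant
  curvature forces c = 1/2; then 2 A_t B_t - A B = kappa kappa~ - 1, which gives kappa kappa~ = 1, and
  conversely under these conditions the curvature tensor is that of constant curvature -1/2.
  For the unit normal (sqrt (1 - c) e1, - sqrt c e2) the mean curvature vanishes iff a fixed linear
  combination of cosh and sinh of (sqrt c + sqrt (1 - c)) t and (sqrt c - sqrt (1 - c)) t vanishes;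
  linear independence of these functions forces sqrt c = sqrt (1 - c) and then kappa = kappa~.
  Both curvatures are then constant because U is connected and kappa depends only on r, kappa~ only on s.
*)

lemma pd_eqI:
  assumes "((\<lambda>s. f (x + (s - x$i) *\<^sub>R axis i 1)) has_vector_derivative D) (at (x$i))"
  shows "pd i f x = D"
proof -
  have "((\<lambda>h. x$i + h) has_vector_derivative 1) (at 0)"
    by (auto intro!: derivative_eq_intros simp: has_real_derivative_iff_has_vector_derivative[symmetric])
  then have "((\<lambda>s. f (x + (s - x$i) *\<^sub>R axis i 1)) \<circ> (\<lambda>h. x$i + h)
      has_vector_derivative 1 *\<^sub>R D) (at 0)"
    by (rule vector_diff_chain_at) (simp add: assms)
  then have "((\<lambda>h. f (x + h *\<^sub>R axis i 1)) has_vector_derivative D) (at 0)"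
    by (simp add: o_def)
  then show ?thesis
    by (simp add: pd_def vector_derivative_at)
qed

lemma pd_eqI_real:
  assumes "((\<lambda>s. f (x + (s - x$i) *\<^sub>R axis i 1)) has_real_derivative D) (at (x$i))"
  shows "pd i f x = D"
  using assms by (simp add: pd_eqI has_real_derivative_iff_has_vector_derivative)

lemma pd_const [simp]: "pd i (\<lambda>y. k::real) x = 0"
  by (rule pd_eqI_real) simp

lemma pd_cong_open:
  assumes "open S" "x \<in> S" and eq: "\<And>y. y \<in> S \<Longrightarrow> f y = g y"
  shows "pd i f x = pd i g x"
proof -
  let ?S = "(\<lambda>h::real. x + h *\<^sub>R axis i (1::real)) -` S"
  have "open ?S"
    using open_vimage[OF \<open>open S\<close>, of "\<lambda>h. x + h *\<^sub>R axis i 1"] by (simp add: continuous_intros)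
  moreover have "0 \<in> ?S"
    using \<open>x \<in> S\<close> by simp
  ultimately have "((\<lambda>h. f (x + h *\<^sub>R axis i 1)) has_vector_derivative D) (at 0) \<longleftrightarrow>
      ((\<lambda>h. g (x + h *\<^sub>R axis i 1)) has_vector_derivative D) (at 0)" for D
    using has_vector_derivative_transform_within_open[of _ D 0 ?S] eq by auto
  then show ?thesis
    unfolding pd_def vector_derivative_def by simp
qed

lemma lor_commute: "lor x y = lor y x"
  by (simp add: lor_def algebra_simps)

lemma lor_linear_simps [simp]:
  "lor (k *\<^sub>R x) z = k * lor x z" "lor z (k *\<^sub>R x) = k * lor z x"
  "lor (- x) z = - lor x z" "lor z (- x) = - lor z x"
  "lor 0 z = 0" "lor z 0 = 0"
  by (simp_all add: lor_def algebra_simps)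

lemma lor_add:
  "lor (x + y) z = lor x z + lor y z" "lor z (x + y) = lor z x + lor z y"
  by (simp_all add: lor_def algebra_simps)

lemma bounded_bilinear_lor: "bounded_bilinear lor"
proof
  show "\<exists>K. \<forall>x y. norm (lor x y) \<le> norm x * norm y * K"
  proof (intro exI allI)
    fix x y :: "real^3"
    have "\<bar>lor x y\<bar> \<le> \<bar>x$1\<bar> * \<bar>y$1\<bar> + \<bar>x$2\<bar> * \<bar>y$2\<bar> + \<bar>x$3\<bar> * \<bar>y$3\<bar>"
      by (simp add: lor_def abs_mult[symmetric])
    also have "\<dots> \<le> norm x * norm y + norm x * norm y + norm x * norm y"
      by (intro add_mono mult_mono component_le_norm_cart) auto
    finally show "norm (lor x y) \<le> norm x * norm y * 3"
      by simp
  qed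
qed (simp_all add: lor_add)

lemma cosh_sinh_sq: "cosh z * cosh z - sinh z * sinh (z::real) = 1"
  using hyperbolic_pythagoras[of z] by (simp add: power2_eq_square)

lemma lor_rotated_frame:
  assumes "lor (cosh z *\<^sub>R p + sinh z *\<^sub>R q) v = 0"
  shows "lor (p + k *\<^sub>R q) v = (k * cosh z - sinh z) * lor (sinh z *\<^sub>R p + cosh z *\<^sub>R q) v"
proof -
  have "(k * cosh z - sinh z) * lor (sinh z *\<^sub>R p + cosh z *\<^sub>R q) v - lor (p + k *\<^sub>R q) v
      = (k * sinh z - cosh z) * lor (cosh z *\<^sub>R p + sinh z *\<^sub>R q) v
        + (cosh z * cosh z - sinh z * sinh z - 1) * lor (p + k *\<^sub>R q) v"
    by (simp add: lor_add algebra_simps)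
  with assms show ?thesis
    by (simp add: cosh_sinh_sq)
qed

lemma matrix_inv_unique:
  fixes M :: "real^'n^'n"
  assumes "M ** D = mat 1" "D ** M = mat 1"
  shows "matrix_inv M = D"
  unfolding matrix_inv_def
proof (rule some_equality)
  fix E :: "real^'n^'n"
  assume E: "M ** E = mat 1 \<and> E ** M = mat 1"
  have "E = E ** (M ** D)"
    using assms by simp
  also have "\<dots> = (E ** M) ** D"
    by (simp add: matrix_mul_assoc)
  finally show "E = D"
    using E by simp
qed (use assms in auto)

lemma matrix_inv_diagonal:
  fixes d :: "'n::finite \<Rightarrow> real"
  assumes "\<And>i. d i \<noteq> 0"
  shows "matrix_inv (\<chi> i j. if i = j then d i else 0) = (\<chi> i j. if i = j then 1 / d i else 0)"
  by (rule matrix_inv_unique)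
     (auto simp: matrix_matrix_mult_def mat_def vec_eq_iff if_distrib[of "\<lambda>z. _ * z"] assms
       sum.delta cong: if_cong)

lemma connected_const_along_coordinate:
  fixes U :: "(real^'n) set"
  assumes "open U" "connected U" "x0 \<in> U"
    and along: "\<And>x y. x \<in> U \<Longrightarrow> y \<in> U \<Longrightarrow> (\<And>j. j \<noteq> i \<Longrightarrow> x$j = y$j) \<Longrightarrow> f (x$i) = f (y$i)"
  shows "\<forall>x\<in>U. f (x$i) = f (x0$i)"
proof
  fix x
  assume "x \<in> U"
  have "(\<lambda>z. f (z$i)) x0 = (\<lambda>z. f (z$i)) x"
  proof (rule connected_local_const[OF \<open>connected U\<close> \<open>x0 \<in> U\<close> \<open>x \<in> U\<close>], rule ballI)
    fix p
    assume "p \<in> U"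
    obtain e where "e > 0" "ball p e \<subseteq> U"
      using \<open>open U\<close> \<open>p \<in> U\<close> openE by blast
    show "\<forall>\<^sub>F y in at p within U. f (p$i) = f (y$i)"
      unfolding eventually_at
    proof (intro exI[of _ e] conjI ballI impI)
      fix y
      assume y: "y \<in> U" "y \<noteq> p \<and> dist y p < e"
      define z where "z = p + (y$i - p$i) *\<^sub>R axis i (1::real)"
      have "dist z p = \<bar>y$i - p$i\<bar>"
        by (simp add: z_def dist_norm)
      also have "\<dots> \<le> dist y p"
        using dist_vec_nth_le[of y i p] by (simp add: dist_real_def)
      finally have "z \<in> U"
        using y \<open>ball p e \<subseteq> U\<close> by (auto simp: dist_commute subset_iff)
      moreover have "z$i = y$i" "\<And>j. j \<noteq> i \<Longrightarrow> z$j = p$j"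
        by (simp_all add: z_def axis_def)
      ultimately show "f (p$i) = f (y$i)"
        using along[OF \<open>p \<in> U\<close>] by metis
    qed (rule \<open>e > 0\<close>)
  qed
  then show "f (x$i) = f (x0$i)"
    by simp
qed

lemma deriv_eq_0_if_const_along_coordinate:
  fixes U :: "(real^'n) set" and f :: "real \<Rightarrow> real"
  assumes "open U" "x \<in> U" and const: "\<forall>y\<in>U. f (y$i) = k"
  shows "deriv f (x$i) = 0"
proof -
  let ?S = "(\<lambda>r. x + (r - x$i) *\<^sub>R axis i (1::real)) -` U"
  have S: "open ?S"
    using open_vimage[OF \<open>open U\<close>, of "\<lambda>r. x + (r - x$i) *\<^sub>R axis i 1"] by (simp add: continuous_intros)
  have xS: "x$i \<in> ?S"
    using \<open>x \<in> U\<close> by simp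
  have "k = f r" if "r \<in> ?S" for r
  proof -
    have "f ((x + (r - x$i) *\<^sub>R axis i 1) $ i) = k"
      using const that by blast
    then show ?thesis
      by (simp add: axis_def)
  qed
  then have "(f has_real_derivative 0) (at (x$i))"
    by (intro has_field_derivative_transform_within_open[OF DERIV_const S xS])
  then show ?thesis
    by (rule DERIV_imp_deriv)
qed

lemma derivative_eq_0_if_vanishing_on_open:
  assumes "open S" "t \<in> S" "\<And>s. s \<in> S \<Longrightarrow> f s = (0::real)" "(f has_real_derivative D) (at t)"
  shows "D = 0"
proof -
  have "(f has_real_derivative 0) (at t)"
    using assms(3) by (intro has_field_derivative_transform_within_open[OF DERIV_const assms(1,2)]) simp
  with assms(4) show ?thesis
    using DERIV_unique by blast
qed

lemma cosh_sinh_coeffs_eq_0: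
  fixes \<alpha> \<beta> u :: real
  assumes "\<alpha> * cosh u + \<beta> * sinh u = 0" "\<alpha> * sinh u + \<beta> * cosh u = 0"
  shows "\<alpha> = 0 \<and> \<beta> = 0"
proof -
  have "\<alpha> * (cosh u * cosh u - sinh u * sinh u)
      = cosh u * (\<alpha> * cosh u + \<beta> * sinh u) - sinh u * (\<alpha> * sinh u + \<beta> * cosh u)"
    and "\<beta> * (cosh u * cosh u - sinh u * sinh u)
      = cosh u * (\<alpha> * sinh u + \<beta> * cosh u) - sinh u * (\<alpha> * cosh u + \<beta> * sinh u)"
    by (simp_all add: algebra_simps)
  with assms show ?thesis
    by (simp add: cosh_sinh_sq)
qed

lemma cosh_sinh_linear_independent:
  fixes l m \<alpha> \<beta> \<gamma> \<delta> :: real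
  assumes "open S" "t0 \<in> S" and "l \<noteq> 0" "m \<noteq> 0" "l * l \<noteq> m * m"
    and vanish: "\<And>t. t \<in> S \<Longrightarrow> \<alpha> * cosh (l*t) + \<beta> * sinh (l*t) + \<gamma> * cosh (m*t) + \<delta> * sinh (m*t) = 0"
  shows "\<alpha> = 0 \<and> \<beta> = 0 \<and> \<gamma> = 0 \<and> \<delta> = 0"
proof -
  define P where "P t = \<alpha> * cosh (l*t) + \<beta> * sinh (l*t)" for t
  define P' where "P' t = \<alpha> * sinh (l*t) + \<beta> * cosh (l*t)" for t
  define Q where "Q t = \<gamma> * cosh (m*t) + \<delta> * sinh (m*t)" for t
  define Q' where "Q' t = \<gamma> * sinh (m*t) + \<delta> * cosh (m*t)" for t
  have dP: "(P has_real_derivative l * P' t) (at t)" and dP': "(P' has_real_derivative l * P t) (at t)"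
    and dQ: "(Q has_real_derivative m * Q' t) (at t)" and dQ': "(Q' has_real_derivative m * Q t) (at t)" for t
    unfolding P_def[abs_def] P'_def[abs_def] Q_def[abs_def] Q'_def[abs_def]
    by (auto intro!: derivative_eq_intros simp: algebra_simps)
  have PQ: "P t + Q t = 0" if "t \<in> S" for t
    using vanish[OF that] by (simp add: P_def Q_def add.assoc)
  have PQ': "l * P' t + m * Q' t = 0" if "t \<in> S" for t
    using derivative_eq_0_if_vanishing_on_open[OF \<open>open S\<close> that PQ DERIV_add[OF dP dQ]] .
  have PQ'': "l * (l * P t) + m * (m * Q t) = 0" if "t \<in> S" for t
    using derivative_eq_0_if_vanishing_on_open[OF \<open>open S\<close> that PQ'
        DERIV_add[OF DERIV_cmult[OF dP'] DERIV_cmult[OF dQ']]] .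
  have P0: "P t = 0" if "t \<in> S" for t
  proof -
    have "(l * l - m * m) * P t = l * (l * P t) + m * (m * Q t) - m * m * (P t + Q t)"
      by (simp add: algebra_simps)
    then show ?thesis
      using PQ[OF that] PQ''[OF that] \<open>l * l \<noteq> m * m\<close> by simp
  qed
  have Q0: "Q t = 0" if "t \<in> S" for t
    using PQ[OF that] P0[OF that] by simp
  have "l * P' t0 = 0" "m * Q' t0 = 0"
    using derivative_eq_0_if_vanishing_on_open[OF \<open>open S\<close> \<open>t0 \<in> S\<close> P0 dP]
      derivative_eq_0_if_vanishing_on_open[OF \<open>open S\<close> \<open>t0 \<in> S\<close> Q0 dQ] by auto
  then have "P' t0 = 0" "Q' t0 = 0"
    using \<open>l \<noteq> 0\<close> \<open>m \<noteq> 0\<close> by simp_all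
  with P0[OF \<open>t0 \<in> S\<close>] Q0[OF \<open>t0 \<in> S\<close>] show ?thesis
    using cosh_sinh_coeffs_eq_0 unfolding P_def P'_def Q_def Q'_def by blast
qed

lemma gform_axis: "gform F x (axis p 1) (axis q 1) = metric F x p q"
  using exhaust_3[of p] exhaust_3[of q] by (elim disjE) (simp_all add: gform_def sum_3 axis_def)

lemma sec_curv_axis:
  "sec_curv F x (axis p 1) (axis q 1) =
     riem F x p q q p / (metric F x p p * metric F x q q - (metric F x p q)\<^sup>2)"
  unfolding sec_curv_def gform_axis
  using exhaust_3[of p] exhaust_3[of q] by (elim disjE) (simp_all add: sum_3 axis_def)

lemma sec_curv_eq_if_curvature_const:
  assumes metric: "\<And>i j. metric F x i j = (if i = j then d i else 0)"
    and riem: "\<And>i j k l. riem F x i j k l =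
      K * (metric F x i l * metric F x j k - metric F x i k * metric F x j l)"
    and nondeg: "gform F x X X * gform F x Y Y - (gform F x X Y)\<^sup>2 \<noteq> 0"
  shows "sec_curv F x X Y = K"
proof -
  have "(\<Sum>i\<in>UNIV. \<Sum>j\<in>UNIV. \<Sum>k\<in>UNIV. \<Sum>l\<in>UNIV. X$i * Y$j * Y$k * X$l * riem F x i j k l)
      = K * (gform F x X X * gform F x Y Y - (gform F x X Y)\<^sup>2)"
    unfolding riem gform_def metric by (simp add: sum_3 algebra_simps power2_eq_square)
  with nondeg show ?thesis
    by (simp add: sec_curv_def)
qed

lemma cosh_sinh_product_expansion:
  fixes a b t k m :: real
  shows "b * (k * cosh (a*t) - sinh (a*t)) * (cosh (b*t) - m * sinh (b*t))
       - a * (m * cosh (b*t) - sinh (b*t)) * (cosh (a*t) - k * sinh (a*t))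
     = (b - a) * (k + m) / 2 * cosh ((a + b) * t) + (a - b) * (1 + k * m) / 2 * sinh ((a + b) * t)
       + (a + b) * (k - m) / 2 * cosh ((a - b) * t) + (a + b) * (k * m - 1) / 2 * sinh ((a - b) * t)"
  unfolding distrib_right left_diff_distrib cosh_add sinh_add cosh_diff sinh_diff
  by (simp add: algebra_simps divide_simps)

locale frenet =
  fixes I :: "real set" and gam N :: "real \<Rightarrow> real^3" and kap :: "real \<Rightarrow> real"
  assumes frenet_curve: "frenet_curve I gam N kap"
begin

abbreviation T :: "real \<Rightarrow> real^3" where "T r \<equiv> vector_derivative gam (at r)"

lemma open_I: "open I"
  using frenet_curve by (simp add: frenet_curve_def)

lemma gam_deriv: "r \<in> I \<Longrightarrow> (gam has_vector_derivative T r) (at r)"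
  using frenet_curve by (simp add: frenet_curve_def vector_derivative_works[symmetric])

lemma T_deriv: "r \<in> I \<Longrightarrow> (T has_vector_derivative gam r + kap r *\<^sub>R N r) (at r)"
  using frenet_curve by (simp add: frenet_curve_def)

lemma N_deriv: "r \<in> I \<Longrightarrow> (N has_vector_derivative - kap r *\<^sub>R T r) (at r)"
  using frenet_curve by (simp add: frenet_curve_def)

lemma kap_deriv:
  assumes "r \<in> I"
  shows "(kap has_real_derivative deriv kap r) (at r)"
proof -
  have "((deriv ^^ 0) kap) differentiable (at r)"
    using frenet_curve assms unfolding frenet_curve_def by blast
  then show ?thesis
    by (simp add: DERIV_deriv_iff_real_differentiable)
qed

lemma deriv_kap_deriv:
  assumes "r \<in> I"
  shows "(deriv kap has_real_derivative deriv (deriv kap) r) (at r)"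
proof -
  have "((deriv ^^ 1) kap) differentiable (at r)"
    using frenet_curve assms unfolding frenet_curve_def by blast
  then show ?thesis
    by (simp add: DERIV_deriv_iff_real_differentiable)
qed

lemma lor_gam_gam: "r \<in> I \<Longrightarrow> lor (gam r) (gam r) = -1"
  and lor_T_T: "r \<in> I \<Longrightarrow> lor (T r) (T r) = 1"
  and lor_N_N: "r \<in> I \<Longrightarrow> lor (N r) (N r) = 1"
  and lor_N_gam: "r \<in> I \<Longrightarrow> lor (N r) (gam r) = 0"
  and lor_N_T: "r \<in> I \<Longrightarrow> lor (N r) (T r) = 0"
  using frenet_curve by (auto simp: frenet_curve_def)

lemma lor_gam_T:
  assumes "r \<in> I"
  shows "lor (gam r) (T r) = 0"
proof -
  have "((\<lambda>q. lor (gam q) (gam q)) has_vector_derivative lor (gam r) (T r) + lor (T r) (gam r)) (at r)"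
    using bounded_bilinear.has_vector_derivative[OF bounded_bilinear_lor gam_deriv[OF assms]
        gam_deriv[OF assms]] .
  moreover have "((\<lambda>q. lor (gam q) (gam q)) has_vector_derivative 0) (at r)"
    by (rule has_vector_derivative_transform_within_open[of "\<lambda>q. -1" 0 r I])
      (auto simp: open_I assms lor_gam_gam)
  ultimately have "lor (gam r) (T r) + lor (T r) (gam r) = 0"
    using vector_derivative_unique_at by blast
  then show ?thesis
    by (simp add: lor_commute[of "T r"])
qed

lemma lor_frame:
  assumes "r \<in> I"
  shows "lor (u *\<^sub>R gam r + v *\<^sub>R N r) (u' *\<^sub>R gam r + v' *\<^sub>R N r) = v * v' - u * u'"
    and "lor (u *\<^sub>R gam r + v *\<^sub>R N r) (T r) = 0"
    and "lor (T r) (u *\<^sub>R gam r + v *\<^sub>R N r) = 0"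
  using assms lor_gam_gam lor_N_N lor_N_gam lor_gam_T lor_N_T
  by (simp_all add: lor_add lor_commute[of "gam r" "N r"] lor_commute[of "T r" "gam r"]
    lor_commute[of "T r" "N r"] algebra_simps)

end

locale hypersurface_Mc = C1: frenet I gam N kap + C2: frenet J gamt Nt kapt
  for I gam N kap J gamt Nt kapt +
  fixes c :: real and U :: "(real^3) set"
  assumes c_pos: "0 < c" and c_less_1: "c < 1"
    and open_U: "open U" and connected_U: "connected U"
    and U_sub: "U \<subseteq> {x. x$2 \<in> I \<and> x$3 \<in> J}"
    and immersion: "immersion_on (Fmap c gam N gamt Nt) U"
begin

abbreviation "F \<equiv> Fmap c gam N gamt Nt"
abbreviation "a \<equiv> sqrt c"
abbreviation "b \<equiv> sqrt (1 - c)"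

lemma sqrt_c_simps:
  "a * a = c" "b * b = 1 - c" "\<bar>c\<bar> = c" "\<bar>1 - c\<bar> = 1 - c"
  "a * (a * z) = c * z" "b * (b * z) = (1 - c) * z"
  using c_pos c_less_1 by (auto simp: mult.assoc[symmetric])

lemma a_pos: "a > 0" and b_pos: "b > 0"
  using c_pos c_less_1 by auto

lemma in_I: "x \<in> U \<Longrightarrow> x$2 \<in> I" and in_J: "x \<in> U \<Longrightarrow> x$3 \<in> J"
  using U_sub by auto

lemma curvatures_const_if_related:
  assumes "x0 \<in> U" and rel: "\<And>x. x \<in> U \<Longrightarrow> R (kap (x$2)) (kapt (x$3))"
    and inj1: "\<And>u v w. R u w \<Longrightarrow> R v w \<Longrightarrow> u = v"
    and inj2: "\<And>u v w. R w u \<Longrightarrow> R w v \<Longrightarrow> u = v"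
  shows "\<forall>x\<in>U. kap (x$2) = kap (x0$2) \<and> kapt (x$3) = kapt (x0$3)"
proof -
  have "\<forall>x\<in>U. kap (x$2) = kap (x0$2)"
  proof (rule connected_const_along_coordinate[OF open_U connected_U \<open>x0 \<in> U\<close>])
    fix x y :: "real^3"
    assume "x \<in> U" "y \<in> U" and "\<And>j. j \<noteq> 2 \<Longrightarrow> x$j = y$j"
    then have "x$3 = y$3"
      by simp
    then show "kap (x$2) = kap (y$2)"
      using rel[OF \<open>x \<in> U\<close>] rel[OF \<open>y \<in> U\<close>] inj1 by metis
  qed
  moreover have "\<forall>x\<in>U. kapt (x$3) = kapt (x0$3)"
  proof (rule connected_const_along_coordinate[OF open_U connected_U \<open>x0 \<in> U\<close>])
    fix x y :: "real^3"
    assume "x \<in> U" "y \<in> U" and "\<And>j. j \<noteq> 3 \<Longrightarrow> x$j = y$j"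
    then have "x$2 = y$2"
      by simp
    then show "kapt (x$3) = kapt (y$3)"
      using rel[OF \<open>x \<in> U\<close>] rel[OF \<open>y \<in> U\<close>] inj2 by metis
  qed
  ultimately show ?thesis
    by blast
qed

abbreviation e1 :: "real^3 \<Rightarrow> real^3" where
  "e1 y \<equiv> sinh (a * y$1) *\<^sub>R gam (y$2) + cosh (a * y$1) *\<^sub>R N (y$2)"
abbreviation e2 :: "real^3 \<Rightarrow> real^3" where
  "e2 y \<equiv> sinh (b * y$1) *\<^sub>R gamt (y$3) + cosh (b * y$1) *\<^sub>R Nt (y$3)"

(* Closed forms of the partial derivatives of A and B; the second t-derivatives are c A and (1 - c) B. *)
definition A :: "real^3 \<Rightarrow> real" where "A y = cosh (a * y$1) - kap (y$2) * sinh (a * y$1)"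
definition A_t :: "real^3 \<Rightarrow> real" where "A_t y = a * (sinh (a * y$1) - kap (y$2) * cosh (a * y$1))"
definition A_r :: "real^3 \<Rightarrow> real" where "A_r y = - deriv kap (y$2) * sinh (a * y$1)"
definition A_tr :: "real^3 \<Rightarrow> real" where "A_tr y = - a * deriv kap (y$2) * cosh (a * y$1)"
definition A_rr :: "real^3 \<Rightarrow> real" where "A_rr y = - deriv (deriv kap) (y$2) * sinh (a * y$1)"

definition B :: "real^3 \<Rightarrow> real" where "B y = cosh (b * y$1) - kapt (y$3) * sinh (b * y$1)"
definition B_t :: "real^3 \<Rightarrow> real" where "B_t y = b * (sinh (b * y$1) - kapt (y$3) * cosh (b * y$1))"
definition B_s :: "real^3 \<Rightarrow> real" where "B_s y = - deriv kapt (y$3) * sinh (b * y$1)"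
definition B_ts :: "real^3 \<Rightarrow> real" where "B_ts y = - b * deriv kapt (y$3) * cosh (b * y$1)"
definition B_ss :: "real^3 \<Rightarrow> real" where "B_ss y = - deriv (deriv kapt) (y$3) * sinh (b * y$1)"

lemma pd_F_t: "x \<in> U \<Longrightarrow> pd 1 F x = (a *\<^sub>R e1 x, b *\<^sub>R e2 x)"
  apply (rule pd_eqI)
  apply (simp add: Fmap_def axis_def)
  by (rule derivative_eq_intros | simp)+ (simp add: algebra_simps)

lemma pd_F_r: "x \<in> U \<Longrightarrow> pd 2 F x = (A x *\<^sub>R C1.T (x$2), 0)"
  apply (rule pd_eqI)
  apply (simp add: Fmap_def axis_def)
  apply (rule derivative_eq_intros C1.gam_deriv C1.N_deriv | simp add: in_I)+
  apply (simp add: A_def algebra_simps)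
  done

lemma pd_F_s: "x \<in> U \<Longrightarrow> pd 3 F x = (0, B x *\<^sub>R C2.T (x$3))"
  apply (rule pd_eqI)
  apply (simp add: Fmap_def axis_def)
  apply (rule derivative_eq_intros C2.gam_deriv C2.N_deriv | simp add: in_J)+
  apply (simp add: B_def algebra_simps)
  done

definition g_diag :: "3 \<Rightarrow> 3 \<Rightarrow> real^3 \<Rightarrow> real" where
  "g_diag i j = (if i \<noteq> j then (\<lambda>y. 0) else if i = 1 then (\<lambda>y. 1)
     else if i = 2 then (\<lambda>y. (A y)\<^sup>2) else (\<lambda>y. (B y)\<^sup>2))"

lemma metric_eq:
  assumes "x \<in> U"
  shows "metric F x i j = g_diag i j x"
  using exhaust_3[of i] exhaust_3[of j] in_I[OF assms] in_J[OF assms]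
  by (elim disjE)
    (simp_all add: g_diag_def metric_def ip6_def pd_F_t pd_F_r pd_F_s assms C1.lor_frame C2.lor_frame
      C1.lor_T_T C2.lor_T_T cosh_sinh_sq sqrt_c_simps power2_eq_square)

lemma A_nonzero: "x \<in> U \<Longrightarrow> A x \<noteq> 0"
  and B_nonzero: "x \<in> U \<Longrightarrow> B x \<noteq> 0"
proof -
  assume "x \<in> U"
  then have "metric F x 2 2 > 0" "metric F x 3 3 > 0"
    using immersion unfolding immersion_on_def by (metis gform_axis axis_eq_0_iff zero_neq_one)+
  then show "A x \<noteq> 0" "B x \<noteq> 0"
    by (auto simp: metric_eq[OF \<open>x \<in> U\<close>] g_diag_def)
qed

lemma ginv_eq:
  assumes "x \<in> U"
  shows "ginv F x i j = (if i = j then 1 / g_diag i i x else 0)"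
proof -
  have "(\<chi> p q. metric F x p q) = (\<chi> p q. if p = q then g_diag p p x else 0)"
    by (simp add: vec_eq_iff metric_eq[OF assms] g_diag_def)
  moreover have "g_diag p p x \<noteq> 0" for p
    using A_nonzero[OF assms] B_nonzero[OF assms] by (simp add: g_diag_def)
  ultimately show ?thesis
    unfolding ginv_def by (simp add: matrix_inv_diagonal)
qed

lemma christ_diagonal:
  assumes "x \<in> U"
  shows "christ F x k i j =
    (pd i (g_diag j k) x + pd j (g_diag i k) x - pd k (g_diag i j) x) / (2 * g_diag k k x)"
proof -
  have "pd p (\<lambda>y. metric F y q l) x = pd p (g_diag q l) x" for p q l
    using open_U assms by (rule pd_cong_open) (simp add: metric_eq)
  then show ?thesis
    using exhaust_3[of k] by (elim disjE) (simp_all add: christ_def sum_3 ginv_eq[OF assms])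
qed

lemma pd_A_terms:
  assumes "x \<in> U"
  shows "pd 1 (\<lambda>y. (A y)\<^sup>2) x = 2 * A x * A_t x"
    and "pd 2 (\<lambda>y. (A y)\<^sup>2) x = 2 * A x * A_r x"
    and "pd 3 (\<lambda>y. (A y)\<^sup>2) x = 0"
    and "pd 1 (\<lambda>y. - (A y * A_t y)) x = - (A_t x * A_t x + c * A x * A x)"
    and "pd 2 (\<lambda>y. - (A y * A_t y)) x = - (A_r x * A_t x + A x * A_tr x)"
    and "pd 3 (\<lambda>y. - (A y * A_t y)) x = 0"
    and "pd 1 (\<lambda>y. A_t y / A y) x = (c * A x * A x - A_t x * A_t x) / (A x * A x)"
    and "pd 2 (\<lambda>y. A_t y / A y) x = (A_tr x * A x - A_t x * A_r x) / (A x * A x)"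
    and "pd 3 (\<lambda>y. A_t y / A y) x = 0"
    and "pd 1 (\<lambda>y. A_r y / A y) x = (A_tr x * A x - A_r x * A_t x) / (A x * A x)"
    and "pd 2 (\<lambda>y. A_r y / A y) x = (A_rr x * A x - A_r x * A_r x) / (A x * A x)"
    and "pd 3 (\<lambda>y. A_r y / A y) x = 0"
  by ((rule pd_eqI_real;
      auto intro!: derivative_eq_intros C1.kap_deriv C1.deriv_kap_deriv
        simp: assms in_I axis_def A_def A_t_def A_r_def A_tr_def A_rr_def
          A_nonzero[OF assms, unfolded A_def] A_nonzero[OF assms, unfolded A_def, simplified];
      (simp add: field_simps sqrt_c_simps)?;
      (simp add: algebra_simps minus_divide_left)?)+)

lemma pd_B_terms:
  assumes "x \<in> U"
  shows "pd 1 (\<lambda>y. (B y)\<^sup>2) x = 2 * B x * B_t x"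
    and "pd 2 (\<lambda>y. (B y)\<^sup>2) x = 0"
    and "pd 3 (\<lambda>y. (B y)\<^sup>2) x = 2 * B x * B_s x"
    and "pd 1 (\<lambda>y. - (B y * B_t y)) x = - (B_t x * B_t x + (1 - c) * B x * B x)"
    and "pd 2 (\<lambda>y. - (B y * B_t y)) x = 0"
    and "pd 3 (\<lambda>y. - (B y * B_t y)) x = - (B_s x * B_t x + B x * B_ts x)"
    and "pd 1 (\<lambda>y. B_t y / B y) x = ((1 - c) * B x * B x - B_t x * B_t x) / (B x * B x)"
    and "pd 2 (\<lambda>y. B_t y / B y) x = 0"
    and "pd 3 (\<lambda>y. B_t y / B y) x = (B_ts x * B x - B_t x * B_s x) / (B x * B x)"
    and "pd 1 (\<lambda>y. B_s y / B y) x = (B_ts x * B x - B_s x * B_t x) / (B x * B x)"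
    and "pd 2 (\<lambda>y. B_s y / B y) x = 0"
    and "pd 3 (\<lambda>y. B_s y / B y) x = (B_ss x * B x - B_s x * B_s x) / (B x * B x)"
  by ((rule pd_eqI_real;
      auto intro!: derivative_eq_intros C2.kap_deriv C2.deriv_kap_deriv
        simp: assms in_J axis_def B_def B_t_def B_s_def B_ts_def B_ss_def
          B_nonzero[OF assms, unfolded B_def] B_nonzero[OF assms, unfolded B_def, simplified];
      (simp add: field_simps sqrt_c_simps)?;
      (simp add: algebra_simps minus_divide_left)?)+)

definition Gamma :: "3 \<Rightarrow> 3 \<Rightarrow> 3 \<Rightarrow> real^3 \<Rightarrow> real" where
  "Gamma k i j =
    (if k = 1 then
       (if i = 2 \<and> j = 2 then (\<lambda>y. - (A y * A_t y))
        else if i = 3 \<and> j = 3 then (\<lambda>y. - (B y * B_t y)) else (\<lambda>y. 0))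
     else if k = 2 then
       (if (i = 1 \<and> j = 2) \<or> (i = 2 \<and> j = 1) then (\<lambda>y. A_t y / A y)
        else if i = 2 \<and> j = 2 then (\<lambda>y. A_r y / A y) else (\<lambda>y. 0))
     else
       (if (i = 1 \<and> j = 3) \<or> (i = 3 \<and> j = 1) then (\<lambda>y. B_t y / B y)
        else if i = 3 \<and> j = 3 then (\<lambda>y. B_s y / B y) else (\<lambda>y. 0)))"

lemma christ_eq:
  assumes "x \<in> U"
  shows "christ F x k i j = Gamma k i j x"
  using exhaust_3[of i] exhaust_3[of j] exhaust_3[of k] A_nonzero[OF assms] B_nonzero[OF assms]
  unfolding christ_diagonal[OF assms]
  apply (elim disjE)
  apply (simp_all add: g_diag_def Gamma_def pd_A_terms[OF assms] pd_B_terms[OF assms])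
  apply (simp_all add: power2_eq_square)
  done

lemma riem_eq:
  assumes "x \<in> U"
  shows "riem F x i j k l =
    (pd i (Gamma l j k) x - pd j (Gamma l i k) x
      + (\<Sum>m\<in>UNIV. Gamma m j k x * Gamma l i m x - Gamma m i k x * Gamma l j m x)) * g_diag l l x"
proof -
  have "pd p (\<lambda>y. christ F y l q k) x = pd p (Gamma l q k) x" for p q
    using open_U assms by (rule pd_cong_open) (simp add: christ_eq)
  then show ?thesis
    using exhaust_3[of l]
    by (elim disjE) (simp_all add: riem_def riem_up_def sum_3 metric_eq[OF assms] christ_eq[OF assms] g_diag_def)
qed

lemmas curvature_simps = riem_eq sum_3 Gamma_def g_diag_def

lemma riem_1221: "x \<in> U \<Longrightarrow> riem F x 1 2 2 1 = - c * (A x)\<^sup>2"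
  using A_nonzero[of x] B_nonzero[of x]
  by (simp add: curvature_simps pd_A_terms pd_B_terms) (simp add: field_simps power2_eq_square)

lemma riem_1331: "x \<in> U \<Longrightarrow> riem F x 1 3 3 1 = - (1 - c) * (B x)\<^sup>2"
  using A_nonzero[of x] B_nonzero[of x]
  by (simp add: curvature_simps pd_A_terms pd_B_terms) (simp add: field_simps power2_eq_square)

lemma riem_2332: "x \<in> U \<Longrightarrow> riem F x 2 3 3 2 = - (A x * A_t x * B x * B_t x)"
  using A_nonzero[of x] B_nonzero[of x]
  by (simp add: curvature_simps pd_A_terms pd_B_terms) (simp add: field_simps power2_eq_square)

lemma riem_eq_if_c_half:
  assumes "x \<in> U" and "c = 1/2" and "deriv kap (x$2) = 0" "deriv kapt (x$3) = 0"
    and "2 * (A_t x * B_t x) = A x * B x"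
  shows "riem F x i j k l = - 1/2 * (g_diag i l x * g_diag j k x - g_diag i k x * g_diag j l x)"
proof -
  have "A_r x = 0" "A_tr x = 0" "B_s x = 0" "B_ts x = 0"
    using assms(3,4) by (simp_all add: A_r_def A_tr_def B_s_def B_ts_def)
  with assms A_nonzero[OF assms(1)] B_nonzero[OF assms(1)] show ?thesis
    using exhaust_3[of i] exhaust_3[of j] exhaust_3[of k] exhaust_3[of l]
    apply (elim disjE)
    apply (simp_all add: curvature_simps pd_A_terms pd_B_terms)
    apply (simp_all add: field_simps power2_eq_square)
    done
qed

lemma coordinate_plane_nondegenerate:
  assumes "x \<in> U" "p \<noteq> q"
  shows "gform F x (axis p 1) (axis p 1) * gform F x (axis q 1) (axis q 1)
    - (gform F x (axis p 1) (axis q 1))\<^sup>2 \<noteq> 0"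
  using A_nonzero[OF assms(1)] B_nonzero[OF assms(1)] exhaust_3[of p] exhaust_3[of q] assms(2)
  by (auto simp: gform_axis metric_eq[OF assms(1)] g_diag_def)

lemma sec_curv_12: "x \<in> U \<Longrightarrow> sec_curv F x (axis 1 1) (axis 2 1) = - c"
  using A_nonzero[of x] by (simp add: sec_curv_axis riem_1221 metric_eq g_diag_def)

lemma sec_curv_13: "x \<in> U \<Longrightarrow> sec_curv F x (axis 1 1) (axis 3 1) = - (1 - c)"
  using B_nonzero[of x] by (simp add: sec_curv_axis riem_1331 metric_eq g_diag_def)

lemma sec_curv_23: "x \<in> U \<Longrightarrow> sec_curv F x (axis 2 1) (axis 3 1) = - (A_t x * B_t x) / (A x * B x)"
  using A_nonzero[of x] B_nonzero[of x]
  by (simp add: sec_curv_axis riem_2332 metric_eq g_diag_def power2_eq_square)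

lemma A_t_B_t_if_c_half:
  assumes "c = 1/2"
  shows "2 * (A_t x * B_t x) - A x * B x = kap (x$2) * kapt (x$3) - 1"
proof -
  define S H k m where "S = sinh (a * x$1)" and "H = cosh (a * x$1)"
    and "k = kap (x$2)" and "m = kapt (x$3)"
  have "b = a" "2 * (a * a) = 1"
    using assms sqrt_c_simps by simp_all
  have "2 * (A_t x * B_t x) = (2 * (a * a)) * ((S - k * H) * (S - m * H))"
    unfolding A_t_def B_t_def \<open>b = a\<close> S_def H_def k_def m_def
    by (simp add: algebra_simps sqrt_c_simps)
  moreover have "A x * B x = (H - k * S) * (H - m * S)"
    unfolding A_def B_def \<open>b = a\<close> S_def H_def k_def m_def ..
  ultimately have "2 * (A_t x * B_t x) - A x * B x = (S - k * H) * (S - m * H) - (H - k * S) * (H - m * S)"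
    using \<open>2 * (a * a) = 1\<close> by simp
  also have "\<dots> = (k * m - 1) * (H * H - S * S)"
    by (simp add: algebra_simps)
  finally show ?thesis
    by (simp add: S_def H_def k_def m_def cosh_sinh_sq)
qed

lemma const_sec_curv_if:
  assumes "c = 1/2" and "k * kt = 1" and const: "\<forall>x\<in>U. kap (x$2) = k \<and> kapt (x$3) = kt"
  shows "const_sec_curv F U (-1/2)"
  unfolding const_sec_curv_def
proof (intro ballI allI impI)
  fix x X Y
  assume x: "x \<in> U" and nondeg: "gform F x X X * gform F x Y Y - (gform F x X Y)\<^sup>2 \<noteq> 0"
  have "deriv kap (x$2) = 0" "deriv kapt (x$3) = 0"
    using const by (auto intro: deriv_eq_0_if_const_along_coordinate[OF open_U x])
  moreover have "2 * (A_t x * B_t x) = A x * B x"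
    using A_t_B_t_if_c_half[OF \<open>c = 1/2\<close>, of x] const x \<open>k * kt = 1\<close> by simp
  ultimately show "sec_curv F x X Y = -1/2"
    using riem_eq_if_c_half[OF x \<open>c = 1/2\<close>] metric_eq[OF x]
    by (intro sec_curv_eq_if_curvature_const[OF _ _ nondeg, where d = "\<lambda>i. g_diag i i x"])
      (simp_all add: g_diag_def)
qed

lemma const_sec_curv_imp:
  assumes "const_sec_curv F U K" and "x0 \<in> U"
  shows "c = 1/2 \<and> K = -1/2 \<and> (\<exists>k kt. k * kt = 1 \<and> (\<forall>x\<in>U. kap (x$2) = k \<and> kapt (x$3) = kt))"
proof -
  have sec: "sec_curv F x (axis p 1) (axis q 1) = K" if "x \<in> U" "p \<noteq> q" for x p q
    using assms(1) coordinate_plane_nondegenerate[OF that] that(1) unfolding const_sec_curv_def by blast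
  have "K = - c" "K = - (1 - c)"
    using sec[OF \<open>x0 \<in> U\<close>, of 1 2] sec[OF \<open>x0 \<in> U\<close>, of 1 3]
      sec_curv_12[OF \<open>x0 \<in> U\<close>] sec_curv_13[OF \<open>x0 \<in> U\<close>] by simp_all
  then have c: "c = 1/2" and K: "K = -1/2"
    by simp_all
  have prod: "kap (x$2) * kapt (x$3) = 1" if "x \<in> U" for x
  proof -
    have "- (A_t x * B_t x) / (A x * B x) = - 1/2"
      using sec[OF that, of 2 3] sec_curv_23[OF that] K by force
    then have "2 * (A_t x * B_t x) = A x * B x"
      using A_nonzero[OF that] B_nonzero[OF that] by (simp add: field_simps)
    then show ?thesis
      using A_t_B_t_if_c_half[OF c, of x] by simp
  qed
  have "\<forall>x\<in>U. kap (x$2) = kap (x0$2) \<and> kapt (x$3) = kapt (x0$3)"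
    using \<open>x0 \<in> U\<close> prod
    by (rule curvatures_const_if_related[where R = "\<lambda>u v. u * v = 1"])
      (metis mult_cancel_left mult_cancel_right mult_zero_left zero_neq_one)+
  with c K prod[OF \<open>x0 \<in> U\<close>] show ?thesis
    by blast
qed

lemma pd_pd_F_tt:
  assumes "x \<in> U"
  shows "pd 1 (pd 1 F) x = (c *\<^sub>R fst (F x), (1 - c) *\<^sub>R snd (F x))"
proof -
  have "pd 1 (pd 1 F) x = pd 1 (\<lambda>y. (a *\<^sub>R e1 y, b *\<^sub>R e2 y)) x"
    using open_U assms by (rule pd_cong_open) (simp add: pd_F_t)
  also have "\<dots> = (c *\<^sub>R fst (F x), (1 - c) *\<^sub>R snd (F x))"
    apply (rule pd_eqI)
    apply (simp add: axis_def)
    apply (rule derivative_eq_intros refl | simp)+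
    apply (simp add: Fmap_def scaleR_add_right algebra_simps sqrt_c_simps)
    done
  finally show ?thesis .
qed

lemma pd_pd_F_rr:
  assumes "x \<in> U"
  shows "pd 2 (pd 2 F) x = (A_r x *\<^sub>R C1.T (x$2) + A x *\<^sub>R (gam (x$2) + kap (x$2) *\<^sub>R N (x$2)), 0)"
proof -
  have "pd 2 (pd 2 F) x = pd 2 (\<lambda>y. (A y *\<^sub>R C1.T (y$2), 0)) x"
    using open_U assms by (rule pd_cong_open) (simp add: pd_F_r)
  also have "\<dots> = (A_r x *\<^sub>R C1.T (x$2) + A x *\<^sub>R (gam (x$2) + kap (x$2) *\<^sub>R N (x$2)), 0)"
    apply (rule pd_eqI)
    apply (simp add: axis_def A_def)
    apply (rule derivative_eq_intros refl C1.kap_deriv C1.T_deriv | simp add: in_I assms)+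
    apply (simp add: A_def A_r_def algebra_simps)
    done
  finally show ?thesis .
qed

lemma pd_pd_F_ss:
  assumes "x \<in> U"
  shows "pd 3 (pd 3 F) x = (0, B_s x *\<^sub>R C2.T (x$3) + B x *\<^sub>R (gamt (x$3) + kapt (x$3) *\<^sub>R Nt (x$3)))"
proof -
  have "pd 3 (pd 3 F) x = pd 3 (\<lambda>y. (0, B y *\<^sub>R C2.T (y$3))) x"
    using open_U assms by (rule pd_cong_open) (simp add: pd_F_s)
  also have "\<dots> = (0, B_s x *\<^sub>R C2.T (x$3) + B x *\<^sub>R (gamt (x$3) + kapt (x$3) *\<^sub>R Nt (x$3)))"
    apply (rule pd_eqI)
    apply (simp add: axis_def B_def)
    apply (rule derivative_eq_intros refl C2.kap_deriv C2.T_deriv | simp add: in_J assms)+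
    apply (simp add: B_def B_s_def algebra_simps)
    done
  finally show ?thesis .
qed

lemma unit_normal_tangential:
  assumes "x \<in> U" "unit_normal F x \<xi>"
  shows "a * lor (e1 x) (fst \<xi>) + b * lor (e2 x) (snd \<xi>) = 0"
proof -
  have "ip6 (pd 1 F x) \<xi> = 0"
    using assms(2) by (simp add: unit_normal_def)
  then show ?thesis
    by (simp add: pd_F_t[OF assms(1)] ip6_def)
qed

lemma mean_curv_eq:
  assumes "x \<in> U" "unit_normal F x \<xi>"
  shows "mean_curv F x \<xi> =
    ((kap (x$2) * cosh (a * x$1) - sinh (a * x$1)) * lor (e1 x) (fst \<xi>) / A x
     + (kapt (x$3) * cosh (b * x$1) - sinh (b * x$1)) * lor (e2 x) (snd \<xi>) / B x) / 3"
proof -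
  have normal: "lor (fst (F x)) (fst \<xi>) = 0" "lor (snd (F x)) (snd \<xi>) = 0"
    and tangent: "ip6 (pd i F x) \<xi> = 0" for i
    using assms(2) by (simp_all add: unit_normal_def)
  have "lor (C1.T (x$2)) (fst \<xi>) = 0" "lor (C2.T (x$3)) (snd \<xi>) = 0"
    using tangent[of 2] tangent[of 3] A_nonzero[OF assms(1)] B_nonzero[OF assms(1)]
    by (simp_all add: pd_F_r pd_F_s assms(1) ip6_def)
  then have "ip6 (pd 2 (pd 2 F) x) \<xi> = A x * lor (gam (x$2) + kap (x$2) *\<^sub>R N (x$2)) (fst \<xi>)"
    and "ip6 (pd 3 (pd 3 F) x) \<xi> = B x * lor (gamt (x$3) + kapt (x$3) *\<^sub>R Nt (x$3)) (snd \<xi>)"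
    by (simp_all add: pd_pd_F_rr pd_pd_F_ss assms(1) ip6_def lor_add)
  moreover have "ip6 (pd 1 (pd 1 F) x) \<xi> = 0"
    using normal by (simp add: pd_pd_F_tt assms(1) ip6_def)
  \<comment> \<open>\<xi> is orthogonal to the position vector F x, so only its e1- and e2-components enter\<close>
  moreover have "lor (gam (x$2) + kap (x$2) *\<^sub>R N (x$2)) (fst \<xi>)
      = (kap (x$2) * cosh (a * x$1) - sinh (a * x$1)) * lor (e1 x) (fst \<xi>)"
    and "lor (gamt (x$3) + kapt (x$3) *\<^sub>R Nt (x$3)) (snd \<xi>)
      = (kapt (x$3) * cosh (b * x$1) - sinh (b * x$1)) * lor (e2 x) (snd \<xi>)"
    using normal by (simp_all add: lor_rotated_frame Fmap_def)
  ultimately show ?thesis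
    using A_nonzero[OF assms(1)] B_nonzero[OF assms(1)]
    by (simp add: mean_curv_def sum_3 ginv_eq[OF assms(1)] g_diag_def power2_eq_square)
qed

lemma unit_normal_e1_e2:
  assumes "x \<in> U"
  shows "unit_normal F x (b *\<^sub>R e1 x, - (a *\<^sub>R e2 x))"
  using in_I[OF assms] in_J[OF assms]
  by (simp add: unit_normal_def forall_3 Fmap_def pd_F_t pd_F_r pd_F_s assms ip6_def C1.lor_frame C2.lor_frame
      cosh_sinh_sq sqrt_c_simps)

lemma minimal_if:
  assumes "c = 1/2" and const: "\<forall>x\<in>U. kap (x$2) = k \<and> kapt (x$3) = k"
  shows "minimal_on F U"
  unfolding minimal_on_def
proof (intro ballI allI impI)
  fix x \<xi>
  assume "x \<in> U" "unit_normal F x \<xi>"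
  have "b = a"
    using assms by simp
  then have "B x = A x"
    using const \<open>x \<in> U\<close> unfolding A_def B_def \<open>b = a\<close> by simp
  have "a * (lor (e1 x) (fst \<xi>) + lor (e2 x) (snd \<xi>)) = 0"
    using unit_normal_tangential[OF \<open>x \<in> U\<close> \<open>unit_normal F x \<xi>\<close>]
    unfolding \<open>b = a\<close> by (simp add: distrib_left)
  then have sum0: "lor (e1 x) (fst \<xi>) + lor (e2 x) (snd \<xi>) = 0"
    using a_pos by simp
  have "mean_curv F x \<xi> =
      (k * cosh (a * x$1) - sinh (a * x$1)) * (lor (e1 x) (fst \<xi>) + lor (e2 x) (snd \<xi>)) / A x / 3"
    using mean_curv_eq[OF \<open>x \<in> U\<close> \<open>unit_normal F x \<xi>\<close>] const \<open>x \<in> U\<close> \<open>B x = A x\<close>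
    unfolding \<open>b = a\<close> by (simp add: distrib_left add_divide_distrib)
  then show "mean_curv F x \<xi> = 0"
    by (simp add: sum0)
qed

lemma minimal_imp_cosh_sinh_identity:
  assumes "minimal_on F U" "x \<in> U"
  shows "(b - a) * (kap (x$2) + kapt (x$3)) / 2 * cosh ((a + b) * x$1)
       + (a - b) * (1 + kap (x$2) * kapt (x$3)) / 2 * sinh ((a + b) * x$1)
       + (a + b) * (kap (x$2) - kapt (x$3)) / 2 * cosh ((a - b) * x$1)
       + (a + b) * (kap (x$2) * kapt (x$3) - 1) / 2 * sinh ((a - b) * x$1) = 0"
proof -
  have "mean_curv F x (b *\<^sub>R e1 x, - (a *\<^sub>R e2 x)) = 0"
    using assms unit_normal_e1_e2 by (simp add: minimal_on_def)
  then have "(kap (x$2) * cosh (a * x$1) - sinh (a * x$1)) * b / A x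
      - (kapt (x$3) * cosh (b * x$1) - sinh (b * x$1)) * a / B x = 0"
    using in_I[OF assms(2)] in_J[OF assms(2)]
    by (simp add: mean_curv_eq[OF assms(2) unit_normal_e1_e2[OF assms(2)]] C1.lor_frame C2.lor_frame
        cosh_sinh_sq)
  then have "b * (kap (x$2) * cosh (a * x$1) - sinh (a * x$1)) * (cosh (b * x$1) - kapt (x$3) * sinh (b * x$1))
      - a * (kapt (x$3) * cosh (b * x$1) - sinh (b * x$1)) * (cosh (a * x$1) - kap (x$2) * sinh (a * x$1)) = 0"
    using A_nonzero[OF assms(2)] B_nonzero[OF assms(2)] by (simp add: A_def B_def field_simps)
  then show ?thesis
    using cosh_sinh_product_expansion[where a = "sqrt c" and b = "sqrt (1 - c)" and t = "x$1"
        and k = "kap (x$2)" and m = "kapt (x$3)"] by linarith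
qed

lemma minimal_imp_a_eq_b:
  assumes "minimal_on F U" and "x0 \<in> U"
  shows "a = b"
proof (rule ccontr)
  assume "a \<noteq> b"
  define k kt where "k = kap (x0$2)" and "kt = kapt (x0$3)"
  let ?S = "(\<lambda>t. x0 + (t - x0$1) *\<^sub>R axis 1 (1::real)) -` U"
  have "open ?S"
    using open_vimage[OF open_U, of "\<lambda>t. x0 + (t - x0$1) *\<^sub>R axis 1 1"] by (simp add: continuous_intros)
  moreover have "x0$1 \<in> ?S"
    using \<open>x0 \<in> U\<close> by simp
  moreover have "a + b \<noteq> 0" "a - b \<noteq> 0"
    using a_pos b_pos \<open>a \<noteq> b\<close> by linarith+
  moreover have "(a + b) * (a + b) \<noteq> (a - b) * (a - b)"
  proof -
    have "(a + b) * (a + b) - (a - b) * (a - b) = 4 * (a * b)"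
      by algebra
    with mult_pos_pos[OF a_pos b_pos] show ?thesis
      by linarith
  qed
  moreover have "(b - a) * (k + kt) / 2 * cosh ((a + b) * t) + (a - b) * (1 + k * kt) / 2 * sinh ((a + b) * t)
      + (a + b) * (k - kt) / 2 * cosh ((a - b) * t) + (a + b) * (k * kt - 1) / 2 * sinh ((a - b) * t) = 0"
    if "t \<in> ?S" for t
  proof -
    let ?y = "x0 + (t - x0$1) *\<^sub>R axis 1 (1::real)"
    have coords: "?y$1 = t" "?y$2 = x0$2" "?y$3 = x0$3"
      by (simp_all add: axis_def)
    have "?y \<in> U"
      using that by simp
    from minimal_imp_cosh_sinh_identity[OF assms(1) this] show ?thesis
      unfolding coords k_def kt_def .
  qed
  ultimately have "(b - a) * (k + kt) / 2 = 0 \<and> (a - b) * (1 + k * kt) / 2 = 0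
      \<and> (a + b) * (k - kt) / 2 = 0 \<and> (a + b) * (k * kt - 1) / 2 = 0"
    by (rule cosh_sinh_linear_independent)
  then have "1 + k * k = 0"
    using \<open>a + b \<noteq> 0\<close> \<open>a - b \<noteq> 0\<close> by auto
  moreover have "0 \<le> k * k"
    by simp
  ultimately show False
    by linarith
qed

lemma minimal_imp:
  assumes "minimal_on F U" and "x0 \<in> U"
  shows "c = 1/2 \<and> (\<exists>k. \<forall>x\<in>U. kap (x$2) = k \<and> kapt (x$3) = k)"
proof -
  have "a = b"
    using assms by (rule minimal_imp_a_eq_b)
  then have "c = 1 - c"
    using c_pos c_less_1 by simp
  then have "c = 1/2"
    by simp
  have eq: "kap (x$2) = kapt (x$3)" if "x \<in> U" for x
  proof -
    have "(a + b) * (kap (x$2) - kapt (x$3)) / 2 = 0"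
      using minimal_imp_cosh_sinh_identity[OF assms(1) that] \<open>a = b\<close> by simp
    then show ?thesis
      using a_pos b_pos by simp
  qed
  have "\<forall>x\<in>U. kap (x$2) = kap (x0$2) \<and> kapt (x$3) = kapt (x0$3)"
    using \<open>x0 \<in> U\<close> eq by (rule curvatures_const_if_related[where R = "(=)"]) simp_all
  then show ?thesis
    using \<open>c = 1/2\<close> eq[OF \<open>x0 \<in> U\<close>] by (intro conjI exI[of _ "kap (x0$2)"]) auto
qed

end

theorem lemma3p5:
  fixes c :: real and gam N gamt Nt :: "real \<Rightarrow> real^3" and kap kapt :: "real \<Rightarrow> real"
    and I J :: "real set" and U :: "(real^3) set"
  assumes "0 < c" and "c < 1"
    and "frenet_curve I gam N kap" and "frenet_curve J gamt Nt kapt"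
    and "open U" and "connected U" and "U \<noteq> {}"
    and "U \<subseteq> {x. x$2 \<in> I \<and> x$3 \<in> J}"
    and "immersion_on (Fmap c gam N gamt Nt) U"
  shows "(minimal_on (Fmap c gam N gamt Nt) U \<longleftrightarrow>
            c = 1/2 \<and> (\<exists>k. \<forall>x\<in>U. kap (x$2) = k \<and> kapt (x$3) = k))
       \<and> ((\<exists>K. const_sec_curv (Fmap c gam N gamt Nt) U K) \<longleftrightarrow>
            c = 1/2 \<and> (\<exists>k kt. k * kt = 1 \<and> (\<forall>x\<in>U. kap (x$2) = k \<and> kapt (x$3) = kt)))
       \<and> (\<forall>K. const_sec_curv (Fmap c gam N gamt Nt) U K \<longrightarrow> K = -1/2)"
proof -
  interpret hypersurface_Mc I gam N kap J gamt Nt kapt c U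
    using assms by (simp add: hypersurface_Mc_def hypersurface_Mc_axioms_def frenet_def)
  obtain x0 where "x0 \<in> U"
    using \<open>U \<noteq> {}\<close> by blast
  show ?thesis
    using minimal_imp[OF _ \<open>x0 \<in> U\<close>] minimal_if
      const_sec_curv_imp[OF _ \<open>x0 \<in> U\<close>] const_sec_curv_if
    by blast
qed

end
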